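(* Let $X$ be a set of pointed Kripke models, $\Lambda$ a normal modal logic sound with respect to $X$ which is compact, and $D\subseteq\boldsymbol{\mathcal{L}}_{\Lambda}$ a descriptor such that $X$ is saturated with respect to $D$. Then the space $(X_D,\mathcal{T}_D)$ is compact.
   Context: Signature: countable non-empty sets $\Phi$, $\mathcal{I}$; $\mathcal{L}$: $\varphi ::= \top\mid p\mid\neg\varphi\mid\varphi\wedge\varphi\mid\Box_i\varphi$ on pointed Kripke models, standard semantics. $\boldsymbol{\varphi}$: formulas $\Lambda$-provably equivalent to $\varphi$; $\boldsymbol{\mathcal{L}}_{\Lambda}=\{\boldsymbol{\varphi}\}$. $\Lambda$ is compact if a set $A\subseteq\mathcal{L}$ is $\Lambda$-consistent iff every finite subset of $A$ is. A descriptor is $D\subseteq\boldsymbol{\mathcal{L}}_{\Lambda}$; $\boldsymbol{x}_D=\{y\in X:\forall\boldsymbol{\varphi}\in D,\ y\models\varphi\iff x\models\varphi\}$, $X_D=\{\boldsymbol{x}_D:x\in X\}$. $\mathcal{T}_D$ is the topology on $X_D$ generated by the subbasis $\{\boldsymbol{x}:x\models\varphi\}$, $\{\boldsymbol{x}:x\models\neg\varphi\}$, $\boldsymbol{\varphi}\in D$. $X$ is saturated with respect to $D$ if for all $Y,Y'\subseteq D$ such that $B=\{\varphi:\boldsymbol{\varphi}\in Y\}\cup\{\neg\varphi:\boldsymbol{\varphi}\in Y'\}$ is $\Lambda$-consistent, there is $x\in X$ with $x\models\psi$ for all $\psi\in B$. *)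

theory Defs
  imports "HOL-Analysis.Analysis" "HOL-Library.Countable"
begin

datatype ('p, 'i) fm =
    Top
  | Prop 'p
  | Neg "('p, 'i) fm"
  | Conj "('p, 'i) fm" "('p, 'i) fm"
  | Box 'i "('p, 'i) fm"

definition Imp :: "('p, 'i) fm \<Rightarrow> ('p, 'i) fm \<Rightarrow> ('p, 'i) fm" where
  "Imp a b = Neg (Conj a (Neg b))"

definition Iff :: "('p, 'i) fm \<Rightarrow> ('p, 'i) fm \<Rightarrow> ('p, 'i) fm" where
  "Iff a b = Conj (Imp a b) (Imp b a)"

definition Bot :: "('p, 'i) fm" where
  "Bot = Neg Top"

fun Conjs :: "('p, 'i) fm list \<Rightarrow> ('p, 'i) fm" where
  "Conjs [] = Top"
| "Conjs (a # as) = Conj a (Conjs as)"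

fun subst :: "('p \<Rightarrow> ('p, 'i) fm) \<Rightarrow> ('p, 'i) fm \<Rightarrow> ('p, 'i) fm" where
  "subst s Top = Top"
| "subst s (Prop p) = s p"
| "subst s (Neg a) = Neg (subst s a)"
| "subst s (Conj a b) = Conj (subst s a) (subst s b)"
| "subst s (Box i a) = Box i (subst s a)"

text \<open>A Kripke model: a set of worlds, an accessibility relation for each agent,
  and a valuation.  A pointed Kripke model is a model together with a world.\<close>
type_synonym ('w, 'p, 'i) kmodel =
  "'w set \<times> ('i \<Rightarrow> 'w \<Rightarrow> 'w \<Rightarrow> bool) \<times> ('p \<Rightarrow> 'w \<Rightarrow> bool)"

type_synonym ('w, 'p, 'i) pmodel = "('w, 'p, 'i) kmodel \<times> 'w"

definition is_pointed_model :: "('w, 'p, 'i) pmodel \<Rightarrow> bool" where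
  "is_pointed_model x \<longleftrightarrow>
     (case x of ((W, R, V), w) \<Rightarrow> w \<in> W \<and> (\<forall>i u v. R i u v \<longrightarrow> u \<in> W \<and> v \<in> W))"

fun sem :: "('w, 'p, 'i) kmodel \<Rightarrow> 'w \<Rightarrow> ('p, 'i) fm \<Rightarrow> bool" where
  "sem M w Top = True"
| "sem M w (Prop p) = (snd (snd M)) p w"
| "sem M w (Neg a) = (\<not> sem M w a)"
| "sem M w (Conj a b) = (sem M w a \<and> sem M w b)"
| "sem M w (Box i a) = (\<forall>v \<in> fst M. fst (snd M) i w v \<longrightarrow> sem M v a)"

definition sat :: "('w, 'p, 'i) pmodel \<Rightarrow> ('p, 'i) fm \<Rightarrow> bool" where
  "sat x a = sem (fst x) (snd x) a"

fun peval :: "(('p, 'i) fm \<Rightarrow> bool) \<Rightarrow> ('p, 'i) fm \<Rightarrow> bool" where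
  "peval v Top = True"
| "peval v (Prop p) = v (Prop p)"
| "peval v (Neg a) = (\<not> peval v a)"
| "peval v (Conj a b) = (peval v a \<and> peval v b)"
| "peval v (Box i a) = v (Box i a)"

definition tautology :: "('p, 'i) fm \<Rightarrow> bool" where
  "tautology a \<longleftrightarrow> (\<forall>v. peval v a)"

definition normal_logic :: "('p, 'i) fm set \<Rightarrow> bool" where
  "normal_logic \<Lambda> \<longleftrightarrow>
     (\<forall>a. tautology a \<longrightarrow> a \<in> \<Lambda>)
   \<and> (\<forall>i a b. Imp (Box i (Imp a b)) (Imp (Box i a) (Box i b)) \<in> \<Lambda>)
   \<and> (\<forall>a b. a \<in> \<Lambda> \<longrightarrow> Imp a b \<in> \<Lambda> \<longrightarrow> b \<in> \<Lambda>)
   \<and> (\<forall>i a. a \<in> \<Lambda> \<longrightarrow> Box i a \<in> \<Lambda>)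
   \<and> (\<forall>s a. a \<in> \<Lambda> \<longrightarrow> subst s a \<in> \<Lambda>)"

definition sound_wrt :: "('p, 'i) fm set \<Rightarrow> ('w, 'p, 'i) pmodel set \<Rightarrow> bool" where
  "sound_wrt \<Lambda> X \<longleftrightarrow> (\<forall>a \<in> \<Lambda>. \<forall>x \<in> X. sat x a)"

definition consistent :: "('p, 'i) fm set \<Rightarrow> ('p, 'i) fm set \<Rightarrow> bool" where
  "consistent \<Lambda> A \<longleftrightarrow> (\<nexists>as. set as \<subseteq> A \<and> Neg (Conjs as) \<in> \<Lambda>)"

definition compact_logic :: "('p, 'i) fm set \<Rightarrow> bool" where
  "compact_logic \<Lambda> \<longleftrightarrow>
     (\<forall>A. consistent \<Lambda> A \<longleftrightarrow> (\<forall>F. finite F \<and> F \<subseteq> A \<longrightarrow> consistent \<Lambda> F))"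

definition fcls :: "('p, 'i) fm set \<Rightarrow> ('p, 'i) fm \<Rightarrow> ('p, 'i) fm set" where
  "fcls \<Lambda> a = {b. Iff a b \<in> \<Lambda>}"

definition Lclasses :: "('p, 'i) fm set \<Rightarrow> ('p, 'i) fm set set" where
  "Lclasses \<Lambda> = range (fcls \<Lambda>)"

definition pcls ::
  "('p, 'i) fm set \<Rightarrow> ('w, 'p, 'i) pmodel set \<Rightarrow> ('p, 'i) fm set set \<Rightarrow> ('w, 'p, 'i) pmodel
     \<Rightarrow> ('w, 'p, 'i) pmodel set" where
  "pcls \<Lambda> X D x = {y \<in> X. \<forall>a. fcls \<Lambda> a \<in> D \<longrightarrow> (sat y a \<longleftrightarrow> sat x a)}"

definition XD ::
  "('p, 'i) fm set \<Rightarrow> ('w, 'p, 'i) pmodel set \<Rightarrow> ('p, 'i) fm set set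
     \<Rightarrow> ('w, 'p, 'i) pmodel set set" where
  "XD \<Lambda> X D = pcls \<Lambda> X D ` X"

text \<open>The whole space X_D is added (it is open anyway) so
  that the generated topology has carrier exactly X_D even when D is empty.\<close>
definition subbasis_D ::
  "('p, 'i) fm set \<Rightarrow> ('w, 'p, 'i) pmodel set \<Rightarrow> ('p, 'i) fm set set
     \<Rightarrow> ('w, 'p, 'i) pmodel set set set" where
  "subbasis_D \<Lambda> X D =
     insert (XD \<Lambda> X D)
      ({pcls \<Lambda> X D ` {x \<in> X. sat x a} | a. fcls \<Lambda> a \<in> D}
       \<union> {pcls \<Lambda> X D ` {x \<in> X. sat x (Neg a)} | a. fcls \<Lambda> a \<in> D})"

definition TD ::
  "('p, 'i) fm set \<Rightarrow> ('w, 'p, 'i) pmodel set \<Rightarrow> ('p, 'i) fm set set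
     \<Rightarrow> ('w, 'p, 'i) pmodel set topology" where
  "TD \<Lambda> X D = topology_generated_by (subbasis_D \<Lambda> X D)"

definition saturated ::
  "('p, 'i) fm set \<Rightarrow> ('w, 'p, 'i) pmodel set \<Rightarrow> ('p, 'i) fm set set \<Rightarrow> bool" where
  "saturated \<Lambda> X D \<longleftrightarrow>
     (\<forall>Y Y'. Y \<subseteq> D \<longrightarrow> Y' \<subseteq> D \<longrightarrow>
        (let B = {a. fcls \<Lambda> a \<in> Y} \<union> {Neg a | a. fcls \<Lambda> a \<in> Y'} in
         consistent \<Lambda> B \<longrightarrow> (\<exists>x \<in> X. \<forall>b \<in> B. sat x b)))"

end

theory Submission
  imports Defs
begin

text \<open>By the Alexander subbase theorem it suffices to refine covers of \<open>X\<^sub>D\<close> by subbasic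
  sets.  A subbasic cover without finite subcover yields a set of literals, one negating each
  cover member, every finite part of which is satisfied at a point of \<open>X\<close> left uncovered by
  the corresponding finitely many members.  By soundness that set is finitely consistent,
  hence consistent by compactness of \<open>\<Lambda>\<close>, hence satisfied at some point of \<open>X\<close> by
  saturation; but the class of that point lies in no member of the cover.\<close>

lemma topology_generated_by_eq_subbase:
  "topology_generated_by S =
     topology (arbitrary union_of (finite intersection_of (\<lambda>x. x \<in> S) relative_to \<Union>S))"
proof -
  let ?T = "topology (arbitrary union_of (finite intersection_of (\<lambda>x. x \<in> S) relative_to \<Union>S))"
  have open_basis: "openin ?T s" if "s \<in> S" for s
  proof -
    have "(finite intersection_of (\<lambda>x. x \<in> S) relative_to \<Union>S) s"
      using that by (metis Sup_upper inf.absorb_iff2 relative_to_inc finite_intersection_of_inc)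
    then show ?thesis
      unfolding openin_subbase by (simp add: arbitrary_union_of_inc)
  qed
  have "openin (topology_generated_by S) s \<longleftrightarrow> openin ?T s" for s
  proof
    assume "openin (topology_generated_by S) s"
    then have "generate_topology_on S s"
      by (rule openin_topology_generated_by)
    then show "openin ?T s"
      by (rule generate_topology_on_coarsest[where T="openin ?T", rotated 2])
         (use open_basis in auto)
  next
    assume "openin ?T s"
    then show "openin (topology_generated_by S) s"
      by (rule minimal_topology_subbase[rotated 2])
         (auto intro: topology_generated_by_Basis
               simp: openin_topspace[of "topology_generated_by S", simplified])
  qed
  then show ?thesis
    by (simp add: topology_eq)
qed

lemma sat_Neg [simp]: "sat x (Neg a) \<longleftrightarrow> \<not> sat x a"
  by (simp add: sat_def)

lemma sat_Conjs: "sat x (Conjs as) \<longleftrightarrow> (\<forall>a\<in>set as. sat x a)"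
  by (induction as) (auto simp: sat_def)

lemma sat_Iff: "sat x (Iff a b) \<longleftrightarrow> (sat x a \<longleftrightarrow> sat x b)"
  by (auto simp: sat_def Iff_def Imp_def)

lemma satisfiable_imp_consistent:
  assumes "sound_wrt \<Lambda> X" and "x \<in> X" and "\<forall>a\<in>A. sat x a"
  shows "consistent \<Lambda> A"
  unfolding consistent_def
proof
  assume "\<exists>as. set as \<subseteq> A \<and> Neg (Conjs as) \<in> \<Lambda>"
  then obtain as where "set as \<subseteq> A" and "Neg (Conjs as) \<in> \<Lambda>"
    by blast
  then show False
    using assms sat_Conjs unfolding sound_wrt_def by fastforce
qed

lemma normal_logic_Iff_refl: "normal_logic \<Lambda> \<Longrightarrow> Iff a a \<in> \<Lambda>"
  by (simp add: normal_logic_def tautology_def Iff_def Imp_def)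

lemma sat_iff_if_fcls_eq:
  assumes "normal_logic \<Lambda>" and "sound_wrt \<Lambda> X" and "x \<in> X" and "fcls \<Lambda> a = fcls \<Lambda> b"
  shows "sat x a \<longleftrightarrow> sat x b"
proof -
  have "b \<in> fcls \<Lambda> a"
    using normal_logic_Iff_refl[OF assms(1)] assms(4) by (simp add: fcls_def)
  then have "Iff a b \<in> \<Lambda>"
    by (simp add: fcls_def)
  then show ?thesis
    using assms(2,3) sat_Iff unfolding sound_wrt_def by blast
qed

definition truth_set ::
  "('p, 'i) fm set \<Rightarrow> ('w, 'p, 'i) pmodel set \<Rightarrow> ('p, 'i) fm set set \<Rightarrow> ('p, 'i) fm
     \<Rightarrow> ('w, 'p, 'i) pmodel set set" where
  "truth_set \<Lambda> X D a = pcls \<Lambda> X D ` {x \<in> X. sat x a}"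

lemma subbasis_D_eq:
  "subbasis_D \<Lambda> X D = insert (XD \<Lambda> X D)
     ({truth_set \<Lambda> X D a | a. fcls \<Lambda> a \<in> D} \<union> {truth_set \<Lambda> X D (Neg a) | a. fcls \<Lambda> a \<in> D})"
  by (simp add: subbasis_D_def truth_set_def)

lemma sat_iff_if_pcls_eq:
  assumes "y \<in> X" and "pcls \<Lambda> X D y = pcls \<Lambda> X D x" and "fcls \<Lambda> a \<in> D"
  shows "sat y a \<longleftrightarrow> sat x a"
proof -
  have "y \<in> pcls \<Lambda> X D x"
    using assms(1,2) unfolding pcls_def by blast
  then show ?thesis
    using assms(3) unfolding pcls_def by blast
qed

lemma pcls_mem_truth_set_iff:
  assumes "x \<in> X" and "fcls \<Lambda> a \<in> D"
  shows "pcls \<Lambda> X D x \<in> truth_set \<Lambda> X D a \<longleftrightarrow> sat x a"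
    and "pcls \<Lambda> X D x \<in> truth_set \<Lambda> X D (Neg a) \<longleftrightarrow> \<not> sat x a"
  using assms sat_iff_if_pcls_eq[of _ X \<Lambda> D x a] unfolding truth_set_def by force+

definition literals :: "('p, 'i) fm set \<Rightarrow> ('p, 'i) fm set set \<Rightarrow> ('p, 'i) fm set set
     \<Rightarrow> ('p, 'i) fm set" where
  "literals \<Lambda> Y Y' = {a. fcls \<Lambda> a \<in> Y} \<union> {Neg a | a. fcls \<Lambda> a \<in> Y'}"

lemma saturated_finitely_satisfiable_imp_satisfiable:
  assumes "sound_wrt \<Lambda> X" and "compact_logic \<Lambda>" and "saturated \<Lambda> X D"
    and "Y \<subseteq> D" and "Y' \<subseteq> D"
    and "\<And>F. finite F \<Longrightarrow> F \<subseteq> literals \<Lambda> Y Y' \<Longrightarrow> \<exists>x\<in>X. \<forall>a\<in>F. sat x a"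
  shows "\<exists>x\<in>X. \<forall>a\<in>literals \<Lambda> Y Y'. sat x a"
proof -
  have "consistent \<Lambda> F" if "finite F" "F \<subseteq> literals \<Lambda> Y Y'" for F
    using assms(6)[OF that] satisfiable_imp_consistent[OF assms(1)] by blast
  then have "consistent \<Lambda> (literals \<Lambda> Y Y')"
    using assms(2) unfolding compact_logic_def by blast
  then show ?thesis
    using assms(3-5) unfolding saturated_def literals_def Let_def by blast
qed

definition cover_literals ::
  "('p, 'i) fm set \<Rightarrow> ('w, 'p, 'i) pmodel set \<Rightarrow> ('p, 'i) fm set set
     \<Rightarrow> ('w, 'p, 'i) pmodel set set set \<Rightarrow> ('p, 'i) fm set" where
  "cover_literals \<Lambda> X D C =
     literals \<Lambda> {fcls \<Lambda> a | a. fcls \<Lambda> a \<in> D \<and> truth_set \<Lambda> X D (Neg a) \<in> C}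
       {fcls \<Lambda> a | a. fcls \<Lambda> a \<in> D \<and> truth_set \<Lambda> X D a \<in> C}"

lemma cover_literal_avoids_member:
  assumes "normal_logic \<Lambda>" and "sound_wrt \<Lambda> X" and "f \<in> cover_literals \<Lambda> X D C"
  shows "\<exists>c\<in>C. \<forall>x\<in>X. pcls \<Lambda> X D x \<notin> c \<longrightarrow> sat x f"
proof -
  let ?P = "pcls \<Lambda> X D" and ?T = "truth_set \<Lambda> X D"
  consider a where "fcls \<Lambda> a = fcls \<Lambda> f" "fcls \<Lambda> a \<in> D" "?T (Neg a) \<in> C"
    | a b where "f = Neg b" "fcls \<Lambda> a = fcls \<Lambda> b" "fcls \<Lambda> a \<in> D" "?T a \<in> C"
    using assms(3) unfolding cover_literals_def literals_def by auto
  then show ?thesis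
  proof cases
    case (1 a)
    show ?thesis
    proof (intro bexI[OF _ 1(3)] ballI impI)
      fix x assume x: "x \<in> X" and "?P x \<notin> ?T (Neg a)"
      then show "sat x f"
        using pcls_mem_truth_set_iff(2)[OF x 1(2)] sat_iff_if_fcls_eq[OF assms(1,2) x 1(1)] by blast
    qed
  next
    case (2 a b)
    show ?thesis
    proof (intro bexI[OF _ 2(4)] ballI impI)
      fix x assume x: "x \<in> X" and "?P x \<notin> ?T a"
      then show "sat x f"
        using 2(1) pcls_mem_truth_set_iff(1)[OF x 2(3)] sat_iff_if_fcls_eq[OF assms(1,2) x 2(2)]
        by simp
    qed
  qed
qed

lemma cover_literals_finitely_satisfiable:
  assumes "normal_logic \<Lambda>" and "sound_wrt \<Lambda> X" and "\<Union>C \<subseteq> XD \<Lambda> X D"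
    and no_subcover: "\<nexists>C'. finite C' \<and> C' \<subseteq> C \<and> \<Union>C' = XD \<Lambda> X D"
    and "finite F" and "F \<subseteq> cover_literals \<Lambda> X D C"
  shows "\<exists>x\<in>X. \<forall>f\<in>F. sat x f"
proof -
  let ?P = "pcls \<Lambda> X D"
  have "\<forall>f\<in>F. \<exists>c. c \<in> C \<and> (\<forall>x\<in>X. ?P x \<notin> c \<longrightarrow> sat x f)"
    using cover_literal_avoids_member[OF assms(1,2)] assms(6) by blast
  from bchoice[OF this] obtain g
    where g: "\<forall>f\<in>F. g f \<in> C \<and> (\<forall>x\<in>X. ?P x \<notin> g f \<longrightarrow> sat x f)" ..
  have "g ` F \<subseteq> C"
    using g by blast
  have "\<Union>(g ` F) \<noteq> XD \<Lambda> X D"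
  proof
    assume "\<Union>(g ` F) = XD \<Lambda> X D"
    with \<open>g ` F \<subseteq> C\<close> \<open>finite F\<close>
    have "finite (g ` F) \<and> g ` F \<subseteq> C \<and> \<Union>(g ` F) = XD \<Lambda> X D"
      by simp
    with no_subcover show False
      by blast
  qed
  moreover have "\<Union>(g ` F) \<subseteq> XD \<Lambda> X D"
    using \<open>g ` F \<subseteq> C\<close> assms(3) by blast
  ultimately have "\<exists>z\<in>XD \<Lambda> X D. z \<notin> \<Union>(g ` F)"
    by blast
  then obtain x where "x \<in> X" and "?P x \<notin> \<Union>(g ` F)"
    unfolding XD_def by blast
  then show ?thesis
    using g by blast
qed

lemma model_of_cover_literals_uncovered:
  assumes "C \<subseteq> subbasis_D \<Lambda> X D" and "XD \<Lambda> X D \<notin> C"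
    and "x \<in> X" and x: "\<forall>f\<in>cover_literals \<Lambda> X D C. sat x f"
  shows "pcls \<Lambda> X D x \<notin> \<Union>C"
proof
  let ?T = "truth_set \<Lambda> X D"
  assume "pcls \<Lambda> X D x \<in> \<Union>C"
  then obtain c where "c \<in> C" and "pcls \<Lambda> X D x \<in> c" ..
  with assms(1,2) obtain a where a: "fcls \<Lambda> a \<in> D" and c: "c = ?T a \<or> c = ?T (Neg a)"
    unfolding subbasis_D_eq by blast
  from c show False
  proof
    assume "c = ?T a"
    then have "Neg a \<in> cover_literals \<Lambda> X D C"
      using a \<open>c \<in> C\<close> unfolding cover_literals_def literals_def by blast
    then have "\<not> sat x a"
      using x sat_Neg by blast
    then show False
      using \<open>pcls \<Lambda> X D x \<in> c\<close> \<open>c = ?T a\<close> pcls_mem_truth_set_iff(1)[OF assms(3) a] by simp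
  next
    assume "c = ?T (Neg a)"
    then have "a \<in> cover_literals \<Lambda> X D C"
      using a \<open>c \<in> C\<close> unfolding cover_literals_def literals_def by blast
    then have "sat x a"
      using x by blast
    then show False
      using \<open>pcls \<Lambda> X D x \<in> c\<close> \<open>c = ?T (Neg a)\<close> pcls_mem_truth_set_iff(2)[OF assms(3) a] by simp
  qed
qed

lemma subbasis_D_cover_has_finite_subcover:
  assumes "normal_logic \<Lambda>" and "sound_wrt \<Lambda> X" and "compact_logic \<Lambda>" and "saturated \<Lambda> X D"
    and "C \<subseteq> subbasis_D \<Lambda> X D" and "\<Union>C = XD \<Lambda> X D"
  shows "\<exists>C'. finite C' \<and> C' \<subseteq> C \<and> \<Union>C' = XD \<Lambda> X D"
proof (rule ccontr)
  assume no_subcover: "\<not> ?thesis"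
  have "XD \<Lambda> X D \<notin> C"
  proof
    assume "XD \<Lambda> X D \<in> C"
    then have "finite {XD \<Lambda> X D} \<and> {XD \<Lambda> X D} \<subseteq> C \<and> \<Union>{XD \<Lambda> X D} = XD \<Lambda> X D"
      by simp
    with no_subcover show False
      by blast
  qed
  have "\<exists>x\<in>X. \<forall>f\<in>cover_literals \<Lambda> X D C. sat x f"
    unfolding cover_literals_def
  proof (rule saturated_finitely_satisfiable_imp_satisfiable[OF assms(2-4)])
    show "\<exists>x\<in>X. \<forall>f\<in>F. sat x f"
      if "finite F" and "F \<subseteq> literals \<Lambda> {fcls \<Lambda> a | a. fcls \<Lambda> a \<in> D \<and> truth_set \<Lambda> X D (Neg a) \<in> C}
        {fcls \<Lambda> a | a. fcls \<Lambda> a \<in> D \<and> truth_set \<Lambda> X D a \<in> C}" for F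
      by (rule cover_literals_finitely_satisfiable[OF assms(1,2) equalityD1[OF assms(6)]
            no_subcover that(1) that(2)[folded cover_literals_def]])
  qed auto
  then obtain x where "x \<in> X" and "\<forall>f\<in>cover_literals \<Lambda> X D C. sat x f" ..
  then have "pcls \<Lambda> X D x \<notin> \<Union>C"
    by (rule model_of_cover_literals_uncovered[OF assms(5) \<open>XD \<Lambda> X D \<notin> C\<close>])
  moreover have "pcls \<Lambda> X D x \<in> \<Union>C"
    using assms(6) \<open>x \<in> X\<close> unfolding XD_def by (simp add: imageI)
  ultimately show False
    by contradiction
qed

theorem proposition22:
  fixes X :: "('w, 'p :: countable, 'i :: countable) pmodel set"
    and \<Lambda> :: "('p, 'i) fm set"
    and D :: "('p, 'i) fm set set"
  assumes "\<forall>x \<in> X. is_pointed_model x"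
    and "normal_logic \<Lambda>"
    and "sound_wrt \<Lambda> X"
    and "compact_logic \<Lambda>"
    and "D \<subseteq> Lclasses \<Lambda>"
    and "saturated \<Lambda> X D"
  shows "compact_space (TD \<Lambda> X D)"
proof (rule Alexander_subbase)
  show "topology (arbitrary union_of (finite intersection_of (\<lambda>x. x \<in> subbasis_D \<Lambda> X D)
      relative_to \<Union>(subbasis_D \<Lambda> X D))) = TD \<Lambda> X D"
    unfolding TD_def by (simp add: topology_generated_by_eq_subbase)
  have "topspace (TD \<Lambda> X D) = XD \<Lambda> X D"
    unfolding TD_def subbasis_D_def XD_def by auto
  then show "\<exists>C'. finite C' \<and> C' \<subseteq> C \<and> \<Union>C' = topspace (TD \<Lambda> X D)"
    if "C \<subseteq> subbasis_D \<Lambda> X D" and "\<Union>C = topspace (TD \<Lambda> X D)" for C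
    using subbasis_D_cover_has_finite_subcover[OF assms(2-4,6) that(1)] that(2) by simp
qed

end
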